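(* Let $(X,d)$ be a compact doubling metric space with $\operatorname{diam}(X,d)=1/2$ and $\mathcal S$ a hyperbolic filling with parameters $a\ge\lambda\ge6$. Let $\rho:\mathcal S\to(0,\infty)$ satisfy (H1), (H2), (H4) (exponent $p$) and let $C\ge\eta_-^{-p}$. Let $\mu_0$ be the unit mass on $\mathcal S_0=\{v_0\}$ and let $(\mu_k)_{k\ge0}$ be probability mass functions, $\mu_k$ on $\mathcal S_k$, such that for every $k$: $(\mu_k,\mu_{k+1})$ is $(C,\pi)$-compatible, $\mu_{k+1}$ is $(C,\pi)$-balanced, and there is a probability measure on $X\times X$ with marginals $\tilde\mu_k$ and $\tilde\mu_{k+1}$ giving zero mass to $\{(x_1,x_2):d(x_1,x_2)\ge(1+2\lambda a^{-1})a^{-k}\}$, where $\tilde\mu_k=\sum_{v\in\mathcal S_k}\mu_k(v)\delta_{\pi_1(v)}$. Then any subsequential weak limit $\mu$ of $(\tilde\mu_k)_{k\in\mathbb N}$ is a doubling measure on $(X,d)$.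
   Context: Hyperbolic filling: $X_0\subset X_1\subset\cdots$ increasing, $X_n$ maximal $a^{-n}$-separated in $X$ ($X_0=\{x_0\}$); $\mathcal S_n=\{(x,n):x\in X_n\}$, $\mathcal S=\bigcup_n\mathcal S_n$, $\pi_1(x,n)=x$, $v_0=(x_0,0)$. Each $(x,n)$, $n\ge1$, has a fixed parent $(y,n-1)$ with $d(x,y)=\min_{z\in X_{n-1}}d(x,z)$; $\mathcal D_n(v)$ = descendants of $v$ in $\mathcal S_n$; genealogy $g(v)=(v_0,\dots,v_k=v)$. $D_2$: graph distance for the graph with edges vertex–parent and horizontal edges between distinct $(x,n),(y,n)$ with $B(x,\lambda a^{-n})\cap B(y,\lambda a^{-n})\ne\emptyset$. $\pi(v)=\prod_{w\in g(v)}\rho(w)$. (H1) $0<\eta_-\le\rho\le\eta_+<1$. (H2) $\pi(v)\le K_0\pi(w)$ for horizontally adjacent $v,w$, some $K_0\ge1$. (H4) $\sum_{w\in\mathcal D_n(v)}\pi(w)^p\le\pi(v)^p$ for all $v\in\mathcal S_m$, $n>m$. $f:\mathcal S_k\to(0,\infty)$ is $(C,\pi)$-balanced if $f(u)/\pi(u)^p\le C^2f(v)/\pi(v)^p$ for all $u,v\in\mathcal S_k$ with $D_2(u,v)=1$. $(f_0,f_1)$ ($f_0$ on $\mathcal S_k$, $f_1$ on $\mathcal S_{k+1}$) is $(C,\pi)$-compatible if $f_0(u)/\pi(u)^p\le f_1(v)/\pi(v)^p\le Cf_0(u)/\pi(u)^p$ whenever $u$ is the parent of $v$. A measure $\mu$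 is doubling on $(X,d)$ if $\mu\ne0$ and $\mu(B(x,2r))\le C_D\mu(B(x,r))$ for all $x$, $r>0$. *)

theory Defs
  imports "HOL-Probability.Probability"
begin

text \<open>The compact metric space (X,d) is the whole type 'a (X = UNIV), d = dist.
  Vertices of the hyperbolic filling are pairs (x,n) with x in Xs n.\<close>

definition doubling_metric_space :: "'a::metric_space itself \<Rightarrow> bool" where
  "doubling_metric_space _ \<longleftrightarrow>
     (\<exists>N::nat. \<forall>(x::'a) r. r > 0 \<longrightarrow>
        (\<exists>F. finite F \<and> card F \<le> N \<and> ball x r \<subseteq> (\<Union>y\<in>F. ball y (r/2))))"

definition separated :: "real \<Rightarrow> 'a::metric_space set \<Rightarrow> bool" where
  "separated \<epsilon> Y \<longleftrightarrow> (\<forall>x\<in>Y. \<forall>y\<in>Y. x \<noteq> y \<longrightarrow> dist x y \<ge> \<epsilon>)"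

definition maximal_separated :: "real \<Rightarrow> 'a::metric_space set \<Rightarrow> bool" where
  "maximal_separated \<epsilon> Y \<longleftrightarrow> separated \<epsilon> Y \<and>
     (\<forall>Z. Y \<subseteq> Z \<and> separated \<epsilon> Z \<longrightarrow> Z = Y)"

definition hyperbolic_filling ::
  "real \<Rightarrow> ('a::metric_space) \<Rightarrow> (nat \<Rightarrow> 'a set) \<Rightarrow> ('a \<times> nat \<Rightarrow> 'a \<times> nat) \<Rightarrow> bool" where
  "hyperbolic_filling a x0 Xs par \<longleftrightarrow>
     (\<forall>n. Xs n \<subseteq> Xs (Suc n)) \<and> Xs 0 = {x0} \<and>
     (\<forall>n. maximal_separated (a powr (- real n)) (Xs n)) \<and>
     (\<forall>n x. x \<in> Xs (Suc n) \<longrightarrow>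
        snd (par (x, Suc n)) = n \<and> fst (par (x, Suc n)) \<in> Xs n \<and>
        (\<forall>z\<in>Xs n. dist x (fst (par (x, Suc n))) \<le> dist x z))"

definition level :: "(nat \<Rightarrow> 'a set) \<Rightarrow> nat \<Rightarrow> ('a \<times> nat) set" where
  "level Xs n = (\<lambda>x. (x, n)) ` Xs n"

definition vertices :: "(nat \<Rightarrow> 'a set) \<Rightarrow> ('a \<times> nat) set" where
  "vertices Xs = (\<Union>n. level Xs n)"

definition hadj :: "real \<Rightarrow> real \<Rightarrow> (nat \<Rightarrow> 'a::metric_space set) \<Rightarrow> 'a \<times> nat \<Rightarrow> 'a \<times> nat \<Rightarrow> bool" where
  "hadj a lam Xs u v \<longleftrightarrow> u \<in> vertices Xs \<and> v \<in> vertices Xs \<and> snd u = snd v \<and> u \<noteq> v \<and>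
     ball (fst u) (lam * a powr (- real (snd u))) \<inter> ball (fst v) (lam * a powr (- real (snd v))) \<noteq> {}"

definition filling_edges ::
  "real \<Rightarrow> real \<Rightarrow> (nat \<Rightarrow> 'a::metric_space set) \<Rightarrow> ('a \<times> nat \<Rightarrow> 'a \<times> nat) \<Rightarrow> (('a \<times> nat) \<times> ('a \<times> nat)) set" where
  "filling_edges a lam Xs par =
     {(v, par v) | v. v \<in> vertices Xs \<and> snd v \<ge> 1} \<union>
     {(par v, v) | v. v \<in> vertices Xs \<and> snd v \<ge> 1} \<union>
     {(u, v). hadj a lam Xs u v}"

definition D2 ::
  "real \<Rightarrow> real \<Rightarrow> (nat \<Rightarrow> 'a::metric_space set) \<Rightarrow> ('a \<times> nat \<Rightarrow> 'a \<times> nat) \<Rightarrow> 'a \<times> nat \<Rightarrow> 'a \<times> nat \<Rightarrow> nat" where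
  "D2 a lam Xs par u v = (LEAST n. (u, v) \<in> (filling_edges a lam Xs par) ^^ n)"

definition genealogy :: "('a \<times> nat \<Rightarrow> 'a \<times> nat) \<Rightarrow> 'a \<times> nat \<Rightarrow> ('a \<times> nat) list" where
  "genealogy par v = map (\<lambda>i. (par ^^ (snd v - i)) v) [0..<Suc (snd v)]"

definition piw :: "('a \<times> nat \<Rightarrow> real) \<Rightarrow> ('a \<times> nat \<Rightarrow> 'a \<times> nat) \<Rightarrow> 'a \<times> nat \<Rightarrow> real" where
  "piw rho par v = prod_list (map rho (genealogy par v))"

definition descendants ::
  "(nat \<Rightarrow> 'a set) \<Rightarrow> ('a \<times> nat \<Rightarrow> 'a \<times> nat) \<Rightarrow> nat \<Rightarrow> 'a \<times> nat \<Rightarrow> ('a \<times> nat) set" where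
  "descendants Xs par n v = {w \<in> level Xs n. (par ^^ (n - snd v)) w = v}"

definition balanced ::
  "real \<Rightarrow> real \<Rightarrow> (nat \<Rightarrow> 'a::metric_space set) \<Rightarrow> ('a \<times> nat \<Rightarrow> 'a \<times> nat) \<Rightarrow>
   ('a \<times> nat \<Rightarrow> real) \<Rightarrow> real \<Rightarrow> real \<Rightarrow> nat \<Rightarrow> ('a \<times> nat \<Rightarrow> real) \<Rightarrow> bool" where
  "balanced a lam Xs par rho p C k f \<longleftrightarrow>
     (\<forall>u\<in>level Xs k. f u > 0) \<and>
     (\<forall>u\<in>level Xs k. \<forall>v\<in>level Xs k. D2 a lam Xs par u v = 1 \<longrightarrow>
        f u / piw rho par u powr p \<le> C\<^sup>2 * (f v / piw rho par v powr p))"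

definition compatible ::
  "(nat \<Rightarrow> 'a set) \<Rightarrow> ('a \<times> nat \<Rightarrow> 'a \<times> nat) \<Rightarrow>
   ('a \<times> nat \<Rightarrow> real) \<Rightarrow> real \<Rightarrow> real \<Rightarrow> nat \<Rightarrow> ('a \<times> nat \<Rightarrow> real) \<Rightarrow> ('a \<times> nat \<Rightarrow> real) \<Rightarrow> bool" where
  "compatible Xs par rho p C k f0 f1 \<longleftrightarrow>
     (\<forall>u\<in>level Xs k. f0 u > 0) \<and> (\<forall>v\<in>level Xs (Suc k). f1 v > 0) \<and>
     (\<forall>v\<in>level Xs (Suc k). \<forall>u\<in>level Xs k. u = par v \<longrightarrow>
        f0 u / piw rho par u powr p \<le> f1 v / piw rho par v powr p \<and>
        f1 v / piw rho par v powr p \<le> C * (f0 u / piw rho par u powr p))"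

text \<open>The push-forward measure tilde mu_k = sum_v mu_k(v) delta_{pi_1(v)} on the Borel sets.\<close>
definition push_measure :: "(nat \<Rightarrow> 'a::topological_space set) \<Rightarrow> nat \<Rightarrow> ('a \<times> nat \<Rightarrow> real) \<Rightarrow> 'a measure" where
  "push_measure Xs k f = distr (density (count_space (level Xs k)) (\<lambda>v. ennreal (f v))) borel fst"

definition weak_limit :: "('a::metric_space) measure \<Rightarrow> (nat \<Rightarrow> 'a measure) \<Rightarrow> bool" where
  "weak_limit M Ms \<longleftrightarrow> sets M = sets borel \<and> finite_measure M \<and>
     (\<forall>f::'a \<Rightarrow> real. continuous_on UNIV f \<longrightarrow>
        (\<lambda>j. integral\<^sup>L (Ms j) f) \<longlonglongrightarrow> integral\<^sup>L M f)"

definition doubling_measure :: "('a::metric_space) measure \<Rightarrow> bool" where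
  "doubling_measure M \<longleftrightarrow> emeasure M (space M) \<noteq> 0 \<and>
     (\<exists>CD. \<forall>x r. r > 0 \<longrightarrow> measure M (ball x (2 * r)) \<le> CD * measure M (ball x r))"

end

theory Submission
  imports Defs
begin

text \<open>
  Compatibility and balance make the mass of a vertex comparable, up to fixed constants, with
  the mass of its parent and with the masses of its horizontal neighbours. Two vertices of level
  n at distance O(a^-n) have ancestors a bounded number of generations up which coincide
  or are neighbours, so their masses are comparable; since the doubling property bounds the
  number of level-n vertices in a ball of radius R a^-n, the level-n mass of such a ball
  is at most a constant times the mass of the concentric ball of radius a^-n.
  The couplings move mass by less than 3 a^-k from level k to level k + 1, so for
  n \<le> k the level-n and level-k masses of balls agree up to enlarging the radius by 6 a^-n.
  Choosing a^-n comparable to r gives a doubling inequality at radius r for all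
  sufficiently fine level measures, and it passes to the weak limit through continuous
  cut-off functions.
\<close>

section \<open>Separated sets in doubling spaces\<close>

lemma maximal_separated_dense:
  assumes "maximal_separated e Y" "0 < e"
  obtains z where "z \<in> Y" "dist y z < e"
proof (cases "y \<in> Y")
  case True
  with assms(2) show ?thesis by (intro that[of y]) auto
next
  case False
  then have "\<not> separated e (insert y Y)"
    using assms(1) unfolding maximal_separated_def by blast
  moreover have "separated e Y"
    using assms(1) unfolding maximal_separated_def by blast
  ultimately have "\<exists>z\<in>Y. dist y z < e"
    unfolding separated_def by (auto simp: dist_commute not_le)
  then show ?thesis using that by blast
qed

lemma doubling_metric_space_cover:
  assumes "doubling_metric_space TYPE('a::metric_space)"
  obtains N :: nat where
    "\<And>(x::'a) r m. 0 < r \<Longrightarrow>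
      \<exists>F. finite F \<and> card F \<le> N ^ m \<and> ball x r \<subseteq> (\<Union>y\<in>F. ball y (r / 2 ^ m))"
proof -
  obtain N :: nat where N: "\<And>(x::'a) r. 0 < r \<Longrightarrow>
      \<exists>F. finite F \<and> card F \<le> N \<and> ball x r \<subseteq> (\<Union>y\<in>F. ball y (r / 2))"
    using assms unfolding doubling_metric_space_def by blast
  have "\<exists>F. finite F \<and> card F \<le> N ^ m \<and> ball x r \<subseteq> (\<Union>y\<in>F. ball y (r / 2 ^ m))"
    if "0 < r" for x :: 'a and r m
  proof (induction m)
    case 0
    show ?case by (intro exI[of _ "{x}"]) simp
  next
    case (Suc m)
    then obtain F where F: "finite F" "card F \<le> N ^ m" "ball x r \<subseteq> (\<Union>y\<in>F. ball y (r / 2 ^ m))"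
      by blast
    have "\<forall>y::'a. \<exists>G. finite G \<and> card G \<le> N \<and>
        ball y (r / 2 ^ m) \<subseteq> (\<Union>z\<in>G. ball z (r / 2 ^ m / 2))"
      by (intro allI N) (use \<open>0 < r\<close> in simp)
    then obtain G where "\<forall>y::'a. finite (G y) \<and> card (G y) \<le> N \<and>
        ball y (r / 2 ^ m) \<subseteq> (\<Union>z\<in>G y. ball z (r / 2 ^ m / 2))"
      by (rule choice[THEN exE]) blast
    then have G: "finite (G y)" "card (G y) \<le> N"
        "ball y (r / 2 ^ m) \<subseteq> (\<Union>z\<in>G y. ball z (r / 2 ^ m / 2))" for y
      by blast+
    have "card (\<Union>y\<in>F. G y) \<le> (\<Sum>y\<in>F. card (G y))"
      by (rule card_UN_le[OF F(1)])
    also have "\<dots> \<le> card F * N"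
      using sum_bounded_above[of F "\<lambda>y. card (G y)" N] G by auto
    also have "\<dots> \<le> N ^ Suc m"
      using F(2) by (simp add: mult.commute)
    finally have "card (\<Union>y\<in>F. G y) \<le> N ^ Suc m" .
    moreover have "ball x r \<subseteq> (\<Union>z\<in>(\<Union>y\<in>F. G y). ball z (r / 2 ^ m / 2))"
      using F(3) G(3) by blast
    moreover have "finite (\<Union>y\<in>F. G y)"
      using F(1) G(1) by blast
    ultimately show ?case
      by (intro exI[of _ "\<Union>y\<in>F. G y"]) (simp add: mult.commute)
  qed
  then show ?thesis using that by blast
qed

lemma doubling_separated_card_le:
  assumes "doubling_metric_space TYPE('a::metric_space)" "0 < R"
  obtains N :: nat where
    "\<And>(x::'a) e Y. 0 < e \<Longrightarrow> separated e Y \<Longrightarrow> card (Y \<inter> ball x (R * e)) \<le> N"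
proof -
  obtain N :: nat where N: "\<And>(x::'a) r m. 0 < r \<Longrightarrow>
      \<exists>F. finite F \<and> card F \<le> N ^ m \<and> ball x r \<subseteq> (\<Union>y\<in>F. ball y (r / 2 ^ m))"
    using doubling_metric_space_cover[OF assms(1)] by blast
  obtain m where m: "2 * R < 2 ^ m"
    using real_arch_pow[of 2 "2 * R"] by auto
  have "card (Y \<inter> ball x (R * e)) \<le> N ^ m" if "0 < e" "separated e Y" for x :: 'a and e Y
  proof -
    obtain F where F: "finite F" "card F \<le> N ^ m" "ball x (R * e) \<subseteq> (\<Union>y\<in>F. ball y (R * e / 2 ^ m))"
      using N[where x = x and r = "R * e" and m = m] \<open>0 < e\<close> assms(2) by auto
    have small: "R * e / 2 ^ m < e / 2"
      using m \<open>0 < e\<close> by (simp add: field_simps)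
    have "card (Y \<inter> ball x (R * e)) \<le> card F"
    proof (rule card_le_if_inj_on_rel[where r = "\<lambda>z y. z \<in> ball y (R * e / 2 ^ m)"])
      fix z1 z2 y
      assume z: "z1 \<in> Y \<inter> ball x (R * e)" "z2 \<in> Y \<inter> ball x (R * e)"
        and y: "z1 \<in> ball y (R * e / 2 ^ m)" "z2 \<in> ball y (R * e / 2 ^ m)"
      have "dist z1 z2 \<le> dist y z1 + dist y z2"
        by (rule dist_triangle3)
      also have "\<dots> < e"
        using y small unfolding mem_ball by linarith
      finally show "z1 = z2"
        using \<open>separated e Y\<close> z unfolding separated_def by (meson IntD1 not_le)
    next
      fix z assume "z \<in> Y \<inter> ball x (R * e)"
      then show "\<exists>y. y \<in> F \<and> z \<in> ball y (R * e / 2 ^ m)"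
        using F(3) by blast
    qed (rule F(1))
    with F(2) show ?thesis by linarith
  qed
  then show ?thesis using that by blast
qed

section \<open>The hyperbolic filling\<close>

lemma powr_minus_real_nat: "0 < a \<Longrightarrow> a powr - real n = inverse a ^ n"
  by (simp add: powr_minus powr_realpow power_inverse)

lemma level_iff: "v \<in> level Xs n \<longleftrightarrow> snd v = n \<and> fst v \<in> Xs n"
  unfolding level_def by (cases v) auto

lemma level_subset_vertices: "level Xs n \<subseteq> vertices Xs"
  unfolding vertices_def by auto

lemma D2_eq_1_if_hadj:
  assumes "hadj a lam Xs u v"
  shows "D2 a lam Xs par u v = 1"
  unfolding D2_def
proof (rule Least_equality)
  show "(u, v) \<in> filling_edges a lam Xs par ^^ 1"
    using assms unfolding filling_edges_def by auto
  fix n assume "(u, v) \<in> filling_edges a lam Xs par ^^ n"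
  moreover have "u \<noteq> v"
    using assms unfolding hadj_def by auto
  ultimately show "1 \<le> n"
    by (cases n) auto
qed

locale filling_space =
  fixes a :: real and x0 :: "'a::metric_space"
    and Xs :: "nat \<Rightarrow> 'a set" and par :: "'a \<times> nat \<Rightarrow> 'a \<times> nat"
  assumes hyperbolic_filling: "hyperbolic_filling a x0 Xs par"
    and two_le_a: "2 \<le> a"
begin

lemma a_pos: "0 < a"
  using two_le_a by simp

lemma level_0: "level Xs 0 = {(x0, 0)}"
  using hyperbolic_filling unfolding hyperbolic_filling_def level_def by auto

lemma separated_level_points: "separated (inverse a ^ n) (Xs n)"
  using hyperbolic_filling a_pos
  unfolding hyperbolic_filling_def maximal_separated_def by (simp add: powr_minus_real_nat)

lemma exists_close_level_point: obtains v where "v \<in> level Xs n" "dist x (fst v) < inverse a ^ n"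
proof -
  have "maximal_separated (inverse a ^ n) (Xs n)"
    using hyperbolic_filling a_pos unfolding hyperbolic_filling_def by (simp add: powr_minus_real_nat)
  then obtain y where "y \<in> Xs n" "dist x y < inverse a ^ n"
    using maximal_separated_dense a_pos by (metis inverse_positive_iff_positive zero_less_power)
  then show ?thesis
    by (intro that[of "(y, n)"]) (auto simp: level_iff)
qed

lemma par_in_level: "v \<in> level Xs (Suc n) \<Longrightarrow> par v \<in> level Xs n"
  using hyperbolic_filling unfolding hyperbolic_filling_def level_iff by (cases v) auto

lemma dist_par_less:
  assumes "v \<in> level Xs (Suc n)"
  shows "dist (fst v) (fst (par v)) < inverse a ^ n"
proof -
  obtain w where w: "w \<in> level Xs n" "dist (fst v) (fst w) < inverse a ^ n"
    using exists_close_level_point .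
  have "dist (fst v) (fst (par v)) \<le> dist (fst v) (fst w)"
    using hyperbolic_filling assms w(1) unfolding hyperbolic_filling_def level_iff
    by (cases v) auto
  with w(2) show ?thesis by linarith
qed

lemma funpow_par_in_level: "v \<in> level Xs (m + j) \<Longrightarrow> (par ^^ j) v \<in> level Xs m"
proof (induction j arbitrary: m)
  case (Suc j)
  then have "(par ^^ j) v \<in> level Xs (Suc m)"
    by simp
  then show ?case
    by (simp add: par_in_level)
qed simp

lemma dist_funpow_par_le:
  assumes "v \<in> level Xs (m + j)"
  shows "dist (fst v) (fst ((par ^^ j) v)) \<le> 2 * inverse a ^ m"
  using assms
proof (induction j arbitrary: m)
  case (Suc j)
  define w where "w = (par ^^ j) v"
  have "v \<in> level Xs (Suc m + j)"
    using Suc.prems by simp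
  then have w: "w \<in> level Xs (Suc m)" "dist (fst v) (fst w) \<le> 2 * inverse a ^ Suc m"
    using Suc.IH funpow_par_in_level unfolding w_def by blast+
  have "2 * inverse a ^ Suc m \<le> inverse a ^ m"
    using two_le_a by (simp add: field_simps)
  moreover have "dist (fst v) (fst (par w)) \<le> dist (fst v) (fst w) + dist (fst w) (fst (par w))"
    by (rule dist_triangle)
  ultimately show ?case
    using w dist_par_less[OF w(1)] by (simp add: w_def)
qed (simp add: a_pos less_imp_le)

lemma card_level_ball_le:
  assumes "doubling_metric_space TYPE('a)" "0 < R"
  obtains N :: nat where "\<And>n x. card {v \<in> level Xs n. fst v \<in> ball x (R * inverse a ^ n)} \<le> N"
proof -
  obtain N :: nat where
    N: "\<And>(x::'a) e Y. 0 < e \<Longrightarrow> separated e Y \<Longrightarrow> card (Y \<inter> ball x (R * e)) \<le> N"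
    using doubling_separated_card_le[OF assms] by blast
  have "card {v \<in> level Xs n. fst v \<in> ball x (R * inverse a ^ n)} \<le> N" for n x
  proof -
    have "{v \<in> level Xs n. fst v \<in> ball x (R * inverse a ^ n)} =
        (\<lambda>y. (y, n)) ` (Xs n \<inter> ball x (R * inverse a ^ n))"
      unfolding level_def by auto
    then have "card {v \<in> level Xs n. fst v \<in> ball x (R * inverse a ^ n)} =
        card (Xs n \<inter> ball x (R * inverse a ^ n))"
      by (simp add: card_image inj_on_def)
    with N[OF _ separated_level_points] a_pos show ?thesis
      by simp
  qed
  then show ?thesis using that by blast
qed

lemma hadj_if_dist_less:
  assumes "u \<in> level Xs m" "v \<in> level Xs m" "u \<noteq> v"
    and "dist (fst u) (fst v) < lam * inverse a ^ m"
  shows "hadj a lam Xs u v"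
proof -
  have "0 < lam * inverse a ^ m"
    using assms(4) zero_le_dist[of "fst u" "fst v"] by linarith
  with assms(4) have "fst v \<in> ball (fst u) (lam * a powr - real m) \<inter> ball (fst v) (lam * a powr - real m)"
    by (simp add: powr_minus_real_nat a_pos)
  moreover have "u \<in> vertices Xs" "v \<in> vertices Xs"
    using assms(1,2) level_subset_vertices by blast+
  moreover have "snd u = m" "snd v = m"
    using assms(1,2) by (simp_all add: level_iff)
  ultimately show ?thesis
    using assms(3) unfolding hadj_def by auto
qed

lemma funpow_par_eq_or_hadj:
  assumes "5 \<le> lam" "R \<le> a ^ J" "u \<in> level Xs n" "v \<in> level Xs n"
    and "dist (fst u) (fst v) < R * inverse a ^ n"
  defines "j \<equiv> min n J"
  shows "(par ^^ j) u = (par ^^ j) v \<or> hadj a lam Xs ((par ^^ j) u) ((par ^^ j) v)"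
proof -
  define m where "m = n - j"
  have n: "n = m + j"
    unfolding m_def j_def by simp
  have lev: "(par ^^ j) u \<in> level Xs m" "(par ^^ j) v \<in> level Xs m"
    using assms(3,4) funpow_par_in_level unfolding n by blast+
  show ?thesis
  proof (cases "m = 0")
    case True
    then show ?thesis using lev level_0 by auto
  next
    case False
    then have "j = J"
      unfolding m_def j_def by linarith
    have "R * inverse a ^ n = R * inverse a ^ J * inverse a ^ m"
      unfolding n \<open>j = J\<close> by (simp add: power_add)
    also have "\<dots> \<le> inverse a ^ m"
      using assms(2) a_pos by (simp add: field_simps power_inverse)
    finally have "dist (fst u) (fst v) < inverse a ^ m"
      using assms(5) by linarith
    moreover have "dist (fst ((par ^^ j) u)) (fst ((par ^^ j) v)) \<le>
        dist (fst ((par ^^ j) u)) (fst u) + dist (fst u) (fst v) + dist (fst v) (fst ((par ^^ j) v))"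
      using dist_triangle[of "fst ((par ^^ j) u)" "fst ((par ^^ j) v)" "fst u"]
        dist_triangle[of "fst u" "fst ((par ^^ j) v)" "fst v"] by linarith
    moreover have "dist (fst ((par ^^ j) u)) (fst u) \<le> 2 * inverse a ^ m"
        "dist (fst v) (fst ((par ^^ j) v)) \<le> 2 * inverse a ^ m"
      using assms(3,4) dist_funpow_par_le unfolding n by (auto simp: dist_commute)
    moreover have "5 * inverse a ^ m \<le> lam * inverse a ^ m"
      using assms(1) a_pos by (intro mult_right_mono) auto
    ultimately have "dist (fst ((par ^^ j) u)) (fst ((par ^^ j) v)) < lam * inverse a ^ m"
      by linarith
    then show ?thesis
      using lev hadj_if_dist_less by blast
  qed
qed

lemma genealogy_Suc:
  assumes "v \<in> level Xs (Suc n)"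
  shows "genealogy par v = genealogy par (par v) @ [v]"
proof -
  have "snd v = Suc n" "snd (par v) = n"
    using assms par_in_level[OF assms] by (simp_all add: level_iff)
  moreover have "(par ^^ (Suc n - i)) v = (par ^^ (n - i)) (par v)" if "i < Suc n" for i
  proof -
    have "Suc n - i = Suc (n - i)"
      using that by simp
    then show ?thesis
      by (simp only: funpow_Suc_right comp_apply)
  qed
  ultimately show ?thesis
    unfolding genealogy_def by simp
qed

lemma piw_Suc:
  "v \<in> level Xs (Suc n) \<Longrightarrow> piw rho par v = piw rho par (par v) * rho v"
  unfolding piw_def by (simp add: genealogy_Suc)

lemma piw_pos:
  assumes "\<forall>w\<in>vertices Xs. 0 < rho w" "v \<in> level Xs n"
  shows "0 < piw rho par v"
  using assms(2)
proof (induction n arbitrary: v)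
  case 0
  then show ?case
    using assms(1) level_0 level_subset_vertices[of Xs 0]
    by (auto simp: piw_def genealogy_def)
next
  case (Suc n)
  then have "0 < piw rho par (par v)" "0 < rho v"
    using assms(1) level_subset_vertices par_in_level by blast+
  then show ?case
    using Suc.prems by (simp add: piw_Suc)
qed

lemma compatible_parent_bounds:
  assumes "compatible Xs par rho p C k f g" "v \<in> level Xs (Suc k)"
    and "\<forall>w\<in>vertices Xs. 0 < rho w" "0 < eta" "eta \<le> rho v" "rho v \<le> 1" "0 < p"
  shows "g v \<le> C * f (par v)" "f (par v) \<le> eta powr - p * g v"
proof -
  define u where "u = par v"
  have u: "u \<in> level Xs k"
    unfolding u_def by (rule par_in_level[OF assms(2)])
  have pos: "0 < piw rho par u powr p" "0 < rho v powr p" "0 < f u" "0 < g v"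
    using piw_pos[OF assms(3) u] assms(1,2,4,5) u unfolding compatible_def by auto
  have "piw rho par v powr p = piw rho par u powr p * rho v powr p"
    using piw_Suc[OF assms(2)] piw_pos[OF assms(3) u] assms(4,5)
    by (simp add: u_def powr_mult)
  then have "f u / piw rho par u powr p \<le> g v / (piw rho par u powr p * rho v powr p)"
      "g v / (piw rho par u powr p * rho v powr p) \<le> C * (f u / piw rho par u powr p)"
    using assms(1,2) u unfolding compatible_def u_def by auto
  then have low: "f u * rho v powr p \<le> g v" and up: "g v \<le> C * f u * rho v powr p"
    using pos by (simp_all add: field_simps)
  have "0 < C * f u * rho v powr p"
    using up pos by linarith
  then have "0 \<le> C * f u"
    using pos by (simp add: zero_less_mult_iff)
  moreover have "rho v powr p \<le> 1"
    using assms(4-7) by (intro powr_le1) auto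
  ultimately show "g v \<le> C * f (par v)"
    using up mult_left_le[of "rho v powr p" "C * f u"] unfolding u_def by linarith
  have "f u \<le> g v * rho v powr - p"
    using low pos by (simp add: powr_minus field_simps)
  also have "\<dots> \<le> g v * eta powr - p"
    using assms(4,5,7) pos by (intro mult_left_mono powr_mono2') auto
  finally show "f (par v) \<le> eta powr - p * g v"
    unfolding u_def by (simp add: mult.commute)
qed

lemma balanced_hadj_le:
  assumes "balanced a lam Xs par rho p C k f" "hadj a lam Xs u v"
    and "u \<in> level Xs k" "v \<in> level Xs k"
    and "\<forall>w\<in>vertices Xs. 0 < rho w" "piw rho par u \<le> K0 * piw rho par v" "0 < p"
  shows "f u \<le> C\<^sup>2 * K0 powr p * f v"
proof -
  have pos: "0 < piw rho par u" "0 < piw rho par v" "0 < f v"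
    using piw_pos[OF assms(5)] assms(1,3,4) unfolding balanced_def by auto
  then have "0 < K0 * piw rho par v"
    using assms(6) by linarith
  then have "0 < K0"
    using pos by (simp add: zero_less_mult_iff)
  have "f u / piw rho par u powr p \<le> C\<^sup>2 * (f v / piw rho par v powr p)"
    using assms(1-4) D2_eq_1_if_hadj unfolding balanced_def by blast
  then have "f u \<le> C\<^sup>2 * f v * (piw rho par u / piw rho par v) powr p"
    using pos by (simp add: powr_divide field_simps)
  also have "\<dots> \<le> C\<^sup>2 * f v * K0 powr p"
    using pos assms(6,7) \<open>0 < K0\<close> by (intro mult_left_mono powr_mono2) (auto simp: field_simps)
  finally show ?thesis
    by (simp add: mult_ac)
qed

end

section \<open>Masses on the levels\<close>

locale filling_masses = filling_space +
  fixes mu :: "nat \<Rightarrow> 'a::metric_space \<times> nat \<Rightarrow> real"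
  assumes mu_nonneg: "v \<in> level Xs k \<Longrightarrow> 0 \<le> mu k v"
    and sum_mu: "(\<Sum>v\<in>level Xs k. mu k v) = 1"
begin

abbreviation nu :: "nat \<Rightarrow> 'a measure" where
  "nu k \<equiv> push_measure Xs k (mu k)"

lemma finite_level: "finite (level Xs k)"
  using sum_mu[of k] sum.infinite by fastforce

lemma fst_measurable_density:
  "fst \<in> density (count_space (level Xs k)) (\<lambda>v. ennreal (mu k v)) \<rightarrow>\<^sub>M (borel :: 'a measure)"
  by (simp add: measurable_cong_sets[OF sets_density refl] measurable_count_space_eq1)

lemma prob_space_nu: "prob_space (nu k)"
proof
  have "emeasure (nu k) (space (nu k)) =
      emeasure (density (count_space (level Xs k)) (\<lambda>v. ennreal (mu k v))) (level Xs k)"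
    unfolding push_measure_def by (simp add: emeasure_distr fst_measurable_density)
  also have "\<dots> = (\<Sum>v\<in>level Xs k. ennreal (mu k v))"
    by (simp add: emeasure_density nn_integral_count_space_finite finite_level)
  also have "\<dots> = 1"
    using sum_mu mu_nonneg by (simp add: sum_ennreal)
  finally show "emeasure (nu k) (space (nu k)) = 1" .
qed

lemma integral_nu:
  assumes "g \<in> borel_measurable borel"
  shows "integral\<^sup>L (nu k) g = (\<Sum>v\<in>level Xs k. mu k v * g (fst v))"
proof -
  have "integral\<^sup>L (nu k) g =
      integral\<^sup>L (density (count_space (level Xs k)) (\<lambda>v. ennreal (mu k v))) (\<lambda>v. g (fst v))"
    unfolding push_measure_def by (rule integral_distr[OF fst_measurable_density assms])
  also have "\<dots> = integral\<^sup>L (count_space (level Xs k)) (\<lambda>v. mu k v *\<^sub>R g (fst v))"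
    by (rule integral_density) (auto simp: AE_count_space mu_nonneg)
  finally show ?thesis
    by (simp add: lebesgue_integral_count_space_finite[OF finite_level])
qed

lemma measure_nu:
  assumes "A \<in> sets borel"
  shows "measure (nu k) A = sum (mu k) {v \<in> level Xs k. fst v \<in> A}"
proof -
  have "measure (nu k) A = integral\<^sup>L (nu k) (indicator A)"
    by (simp add: push_measure_def)
  also have "\<dots> = (\<Sum>v\<in>level Xs k. if fst v \<in> A then mu k v else 0)"
    unfolding integral_nu[OF borel_measurable_indicator[OF assms]] by (intro sum.cong) auto
  finally show ?thesis
    by (simp add: sum.inter_filter[OF finite_level])
qed

lemma measure_nu_ball_mono: "r \<le> s \<Longrightarrow> measure (nu k) (ball x r) \<le> measure (nu k) (ball x s)"
  using prob_space_nu[of k]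
  by (intro finite_measure.finite_measure_mono prob_space.finite_measure) (auto simp: push_measure_def)

lemma mu_funpow_par_bounds:
  assumes up: "\<And>k v. v \<in> level Xs (Suc k) \<Longrightarrow> mu (Suc k) v \<le> L * mu k (par v)"
    and down: "\<And>k v. v \<in> level Xs (Suc k) \<Longrightarrow> mu k (par v) \<le> L * mu (Suc k) v"
    and "0 \<le> L" "v \<in> level Xs (m + j)"
  shows "mu (m + j) v \<le> L ^ j * mu m ((par ^^ j) v)"
    and "mu m ((par ^^ j) v) \<le> L ^ j * mu (m + j) v"
proof -
  have "mu (m + j) v \<le> L ^ j * mu m ((par ^^ j) v) \<and> mu m ((par ^^ j) v) \<le> L ^ j * mu (m + j) v"
    using assms(4)
  proof (induction j arbitrary: m)
    case (Suc j)
    define w where "w = (par ^^ j) v"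
    have "v \<in> level Xs (Suc m + j)"
      using Suc.prems by simp
    then have w: "w \<in> level Xs (Suc m)"
        "mu (Suc m + j) v \<le> L ^ j * mu (Suc m) w" "mu (Suc m) w \<le> L ^ j * mu (Suc m + j) v"
      using Suc.IH funpow_par_in_level unfolding w_def by blast+
    have "mu (m + Suc j) v \<le> L ^ j * (L * mu m (par w))"
      using w(2) mult_left_mono[OF up[OF w(1)], of "L ^ j"] \<open>0 \<le> L\<close> by simp
    moreover have "mu m (par w) \<le> L * (L ^ j * mu (m + Suc j) v)"
      using down[OF w(1)] mult_left_mono[OF w(3) \<open>0 \<le> L\<close>] by simp
    ultimately show ?case
      by (simp add: w_def mult_ac)
  qed simp
  then show "mu (m + j) v \<le> L ^ j * mu m ((par ^^ j) v)"
    and "mu m ((par ^^ j) v) \<le> L ^ j * mu (m + j) v"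
    by blast+
qed

lemma mu_le_if_eq_or_hadj:
  assumes hadj_le: "\<And>k u v. u \<in> level Xs (Suc k) \<Longrightarrow> v \<in> level Xs (Suc k) \<Longrightarrow>
      hadj a lam Xs u v \<Longrightarrow> mu (Suc k) u \<le> H * mu (Suc k) v"
    and "1 \<le> H" "u \<in> level Xs m" "v \<in> level Xs m" "u = v \<or> hadj a lam Xs u v"
  shows "mu m u \<le> H * mu m v"
  using assms(5)
proof
  assume "u = v"
  then show ?thesis
    using mu_nonneg[OF assms(4)] mult_right_mono[OF \<open>1 \<le> H\<close>] by force
next
  assume h: "hadj a lam Xs u v"
  show ?thesis
  proof (cases m)
    case 0
    then show ?thesis
      using h assms(3,4) level_0 unfolding hadj_def by auto
  next
    case (Suc k)
    then show ?thesis
      using h assms(3,4) hadj_le by blast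
  qed
qed

lemma close_vertices_comparable:
  assumes up: "\<And>k v. v \<in> level Xs (Suc k) \<Longrightarrow> mu (Suc k) v \<le> L * mu k (par v)"
    and down: "\<And>k v. v \<in> level Xs (Suc k) \<Longrightarrow> mu k (par v) \<le> L * mu (Suc k) v"
    and hadj_le: "\<And>k u v. u \<in> level Xs (Suc k) \<Longrightarrow> v \<in> level Xs (Suc k) \<Longrightarrow>
      hadj a lam Xs u v \<Longrightarrow> mu (Suc k) u \<le> H * mu (Suc k) v"
    and "1 \<le> L" "1 \<le> H" "5 \<le> lam"
  obtains K where "0 \<le> K" "\<And>n u v. u \<in> level Xs n \<Longrightarrow> v \<in> level Xs n \<Longrightarrow>
    dist (fst u) (fst v) < R * inverse a ^ n \<Longrightarrow> mu n u \<le> K * mu n v"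
proof -
  obtain J where J: "R \<le> a ^ J"
    using real_arch_pow[of a R] two_le_a by (auto intro: less_imp_le)
  have "mu n u \<le> (L ^ J) ^ 2 * H * mu n v"
    if u: "u \<in> level Xs n" and v: "v \<in> level Xs n" and uv: "dist (fst u) (fst v) < R * inverse a ^ n"
    for n u v
  proof -
    define j where "j = min n J"
    define m where "m = n - j"
    have n: "n = m + j"
      unfolding m_def j_def by simp
    have lev: "(par ^^ j) u \<in> level Xs m" "(par ^^ j) v \<in> level Xs m"
      using u v funpow_par_in_level unfolding n by blast+
    have mid: "mu m ((par ^^ j) u) \<le> H * mu m ((par ^^ j) v)"
      using mu_le_if_eq_or_hadj[OF hadj_le \<open>1 \<le> H\<close> lev]
        funpow_par_eq_or_hadj[OF \<open>5 \<le> lam\<close> J u v uv, folded j_def] by blast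
    have LjJ: "L ^ j \<le> L ^ J"
      using \<open>1 \<le> L\<close> by (simp add: j_def power_increasing)
    have "mu n u \<le> L ^ j * mu m ((par ^^ j) u)"
      using mu_funpow_par_bounds(1)[OF up down _ u[unfolded n]] \<open>1 \<le> L\<close> n by simp
    also have "\<dots> \<le> L ^ j * (H * (L ^ j * mu n v))"
      using mid mu_funpow_par_bounds(2)[OF up down _ v[unfolded n]] \<open>1 \<le> L\<close> \<open>1 \<le> H\<close> n
      by (intro mult_left_mono) (auto intro: order_trans)
    also have "\<dots> = (L ^ j) ^ 2 * H * mu n v"
      by (simp add: power2_eq_square mult_ac)
    also have "\<dots> \<le> (L ^ J) ^ 2 * H * mu n v"
      using LjJ \<open>1 \<le> L\<close> \<open>1 \<le> H\<close> mu_nonneg[OF v]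
      by (intro mult_right_mono power_mono) auto
    finally show ?thesis .
  qed
  moreover have "0 \<le> (L ^ J) ^ 2 * H"
    using \<open>1 \<le> H\<close> by simp
  ultimately show ?thesis
    using that by blast
qed

lemma measure_nu_ball_scale_le:
  assumes "doubling_metric_space TYPE('a)" "0 < R" "0 \<le> K"
    and comparable: "\<And>n u v. u \<in> level Xs n \<Longrightarrow> v \<in> level Xs n \<Longrightarrow>
      dist (fst u) (fst v) < (R + 1) * inverse a ^ n \<Longrightarrow> mu n u \<le> K * mu n v"
  obtains D where "0 \<le> D"
    "\<And>n x. measure (nu n) (ball x (R * inverse a ^ n)) \<le> D * measure (nu n) (ball x (inverse a ^ n))"
proof -
  obtain N :: nat where N: "\<And>n x. card {v \<in> level Xs n. fst v \<in> ball x (R * inverse a ^ n)} \<le> N"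
    using card_level_ball_le[OF assms(1,2)] by blast
  have "measure (nu n) (ball x (R * inverse a ^ n)) \<le> (N * K) * measure (nu n) (ball x (inverse a ^ n))"
    for n x
  proof -
    obtain w where w: "w \<in> level Xs n" "dist x (fst w) < inverse a ^ n"
      using exists_close_level_point .
    define S where "S = {v \<in> level Xs n. fst v \<in> ball x (R * inverse a ^ n)}"
    have "mu n v \<le> K * mu n w" if "v \<in> S" for v
    proof -
      have "dist (fst v) (fst w) \<le> dist x (fst v) + dist x (fst w)"
        by (rule dist_triangle3)
      also have "\<dots> < (R + 1) * inverse a ^ n"
        using that w(2) unfolding S_def by (simp add: algebra_simps)
      finally show ?thesis
        using that w(1) comparable unfolding S_def by blast
    qed
    then have "sum (mu n) S \<le> card S * (K * mu n w)"
      by (rule sum_bounded_above)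
    then have "measure (nu n) (ball x (R * inverse a ^ n)) \<le> card S * (K * mu n w)"
      unfolding S_def by (simp add: measure_nu)
    also have "\<dots> \<le> N * (K * mu n w)"
      using N[of n x] assms(3) mu_nonneg[OF w(1)] unfolding S_def
      by (intro mult_right_mono) auto
    also have "\<dots> \<le> N * (K * measure (nu n) (ball x (inverse a ^ n)))"
      using w finite_level mu_nonneg assms(3)
      by (auto simp: measure_nu intro!: mult_left_mono member_le_sum)
    finally show ?thesis
      by (simp add: mult_ac)
  qed
  moreover have "0 \<le> N * K"
    using assms(3) by simp
  ultimately show ?thesis
    using that by blast
qed

lemma measure_nu_ball_scale_le_if_compatible_balanced:
  assumes "doubling_metric_space TYPE('a)" "0 < R" "5 \<le> lam" "0 < p" "0 < eta"
    and rho: "\<And>v. v \<in> vertices Xs \<Longrightarrow> eta \<le> rho v \<and> rho v \<le> 1"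
    and "eta powr - p \<le> C"
    and K0: "\<And>u v. hadj a lam Xs u v \<Longrightarrow> piw rho par u \<le> K0 * piw rho par v"
    and compat: "\<And>k. compatible Xs par rho p C k (mu k) (mu (Suc k))"
    and bal: "\<And>k. balanced a lam Xs par rho p C (Suc k) (mu (Suc k))"
  obtains D where "0 \<le> D"
    "\<And>n x. measure (nu n) (ball x (R * inverse a ^ n)) \<le> D * measure (nu n) (ball x (inverse a ^ n))"
proof -
  have rho_pos: "\<forall>w\<in>vertices Xs. 0 < rho w"
    using rho \<open>0 < eta\<close> by force
  have rho_bounds: "eta \<le> rho v" "rho v \<le> 1" if "v \<in> level Xs k" for v k
    using rho level_subset_vertices that by blast+
  have "eta powr p \<le> 1"
    using rho_bounds[of "(x0, 0)" 0] level_0 \<open>0 < eta\<close> \<open>0 < p\<close> by (intro powr_le1) auto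
  then have "1 \<le> eta powr - p"
    using \<open>0 < eta\<close> by (simp add: powr_minus one_le_inverse)
  define L where "L = max C (eta powr - p)"
  have up: "mu (Suc k) v \<le> L * mu k (par v)" and down: "mu k (par v) \<le> L * mu (Suc k) v"
    if "v \<in> level Xs (Suc k)" for k v
    using compatible_parent_bounds[OF compat that rho_pos \<open>0 < eta\<close> rho_bounds[OF that] \<open>0 < p\<close>]
      mu_nonneg[OF that] mu_nonneg[OF par_in_level[OF that]]
    unfolding L_def by (meson max.cobounded1 max.cobounded2 mult_right_mono order_trans)+
  define H where "H = max 1 (C\<^sup>2 * K0 powr p)"
  have hadj_le: "mu (Suc k) u \<le> H * mu (Suc k) v"
    if "u \<in> level Xs (Suc k)" "v \<in> level Xs (Suc k)" "hadj a lam Xs u v" for k u v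
    using balanced_hadj_le[OF bal that(3,1,2) rho_pos K0[OF that(3)] \<open>0 < p\<close>] mu_nonneg[OF that(2)]
    unfolding H_def by (meson max.cobounded2 mult_right_mono order_trans)
  have "1 \<le> L" "1 \<le> H"
    unfolding L_def H_def using \<open>1 \<le> eta powr - p\<close> by auto
  then obtain K where "0 \<le> K" "\<And>n u v. u \<in> level Xs n \<Longrightarrow> v \<in> level Xs n \<Longrightarrow>
      dist (fst u) (fst v) < (R + 1) * inverse a ^ n \<Longrightarrow> mu n u \<le> K * mu n v"
    using close_vertices_comparable[where R = "R + 1", OF up down hadj_le _ _ \<open>5 \<le> lam\<close>] by blast
  then show ?thesis
    using measure_nu_ball_scale_le[OF assms(1,2)] that by blast
qed

end

section \<open>Couplings and weak limits\<close>

lemma measure_distr_ball_le_if_AE_dist_less: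
  fixes f g :: "'b \<Rightarrow> 'a::metric_space"
  assumes "finite_measure P" "f \<in> P \<rightarrow>\<^sub>M borel" "g \<in> P \<rightarrow>\<^sub>M borel"
    and "AE z in P. dist (f z) (g z) < c"
  shows "measure (distr P borel f) (ball x s) \<le> measure (distr P borel g) (ball x (s + c))"
proof -
  have "AE z in P. z \<in> f -` ball x s \<inter> space P \<longrightarrow> z \<in> g -` ball x (s + c) \<inter> space P"
    using assms(4)
  proof eventually_elim
    case (elim z)
    have "dist x (g z) \<le> dist x (f z) + dist (f z) (g z)"
      by (rule dist_triangle)
    with elim show ?case
      by auto
  qed
  then have "measure P (f -` ball x s \<inter> space P) \<le> measure P (g -` ball x (s + c) \<inter> space P)"
    using assms(3) by (intro finite_measure.finite_measure_mono_AE[OF assms(1)]) auto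
  then show ?thesis
    using assms(2,3) by (simp add: measure_distr)
qed

lemma coupling_measure_ball_le:
  fixes P :: "('a::metric_space \<times> 'a) measure"
  assumes "prob_space P" "sets P = sets borel" "emeasure P {(x1, x2). c \<le> dist x1 x2} = 0"
  shows "measure (distr P borel fst) (ball x s) \<le> measure (distr P borel snd) (ball x (s + c))"
    and "measure (distr P borel snd) (ball x s) \<le> measure (distr P borel fst) (ball x (s + c))"
proof -
  have meas: "fst \<in> P \<rightarrow>\<^sub>M borel" "snd \<in> P \<rightarrow>\<^sub>M borel"
    unfolding measurable_cong_sets[OF assms(2) refl]
    by (intro borel_measurable_continuous_onI continuous_intros)+
  have "{(x1, x2). c \<le> dist x1 x2} \<in> sets P"
    unfolding assms(2) by (simp add: case_prod_beta' closed_Collect_le borel_closed continuous_intros)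
  moreover have "{z \<in> space P. \<not> dist (fst z) (snd z) < c} = {(x1, x2). c \<le> dist x1 x2}"
    using sets_eq_imp_space_eq[OF assms(2)] by auto
  ultimately have "AE z in P. dist (fst z) (snd z) < c"
    using assms(3) by (subst AE_iff_measurable) auto
  moreover have "finite_measure P"
    using assms(1) by (rule prob_space.finite_measure)
  ultimately show "measure (distr P borel fst) (ball x s) \<le> measure (distr P borel snd) (ball x (s + c))"
    and "measure (distr P borel snd) (ball x s) \<le> measure (distr P borel fst) (ball x (s + c))"
    using meas by (auto intro!: measure_distr_ball_le_if_AE_dist_less simp: dist_commute)
qed

lemma chain_shift_le_up:
  fixes F :: "nat \<Rightarrow> real \<Rightarrow> real"
  assumes mono: "\<And>k s t. s \<le> t \<Longrightarrow> F k s \<le> F k t"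
    and step: "\<And>k s. F k s \<le> F (Suc k) (s + c * q ^ k)"
    and "0 \<le> c" "0 \<le> q" "q \<le> 1/2"
  shows "F n s \<le> F (n + j) (s + 2 * c * q ^ n)"
proof -
  have "F n s \<le> F (n + j) (s + 2 * c * (q ^ n - q ^ (n + j)))" for s
  proof (induction j arbitrary: s)
    case (Suc j)
    have "c * q ^ (n + j) \<le> 2 * c * (q ^ (n + j) - q ^ Suc (n + j))"
      using assms(3-5) mult_left_mono[OF \<open>q \<le> 1/2\<close>, of "2 * c * q ^ (n + j)"]
      by (simp add: algebra_simps)
    then have "F (Suc (n + j)) (s + 2 * c * (q ^ n - q ^ (n + j)) + c * q ^ (n + j))
        \<le> F (Suc (n + j)) (s + 2 * c * (q ^ n - q ^ Suc (n + j)))"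
      by (intro mono) (simp add: algebra_simps)
    with Suc.IH[of s] step[of "n + j"] show ?case
      by (simp del: power_Suc) (meson order_trans)
  qed simp
  moreover have "s + 2 * c * (q ^ n - q ^ (n + j)) \<le> s + 2 * c * q ^ n"
    using assms(3,4) by (intro add_left_mono mult_left_mono) auto
  ultimately show ?thesis
    using mono order_trans by blast
qed

lemma chain_shift_le_down:
  fixes F :: "nat \<Rightarrow> real \<Rightarrow> real"
  assumes mono: "\<And>k s t. s \<le> t \<Longrightarrow> F k s \<le> F k t"
    and step: "\<And>k s. F (Suc k) s \<le> F k (s + c * q ^ k)"
    and "0 \<le> c" "0 \<le> q" "q \<le> 1/2"
  shows "F (n + j) s \<le> F n (s + 2 * c * q ^ n)"
proof -
  \<comment> \<open>reflecting s to -s turns the descending chain into an ascending one\<close>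
  have "- F n (- (- (s + 2 * c * q ^ n))) \<le> - F (n + j) (- (- (s + 2 * c * q ^ n) + 2 * c * q ^ n))"
  proof (rule chain_shift_le_up[where F = "\<lambda>k s. - F k (- s)" and s = "- (s + 2 * c * q ^ n)"
        and n = n and j = j, OF _ _ assms(3-5)])
    show "- F k (- s) \<le> - F k (- t)" if "s \<le> t" for k s t
      using mono[of "- t" "- s" k] that by simp
    show "- F k (- s) \<le> - F (Suc k) (- (s + c * q ^ k))" for k s
      using step[of k "- (s + c * q ^ k)"] by simp
  qed
  then show ?thesis
    by (simp add: add.commute)
qed

lemma inverse_power_bracket:
  fixes a s :: real
  assumes "1 < a" "0 < s" "s < a"
  obtains n where "inverse a ^ n \<le> s" "s < a * inverse a ^ n"
proof -
  have "inverse a < 1"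
    using assms(1) by (simp add: inverse_less_1_iff)
  then have ex: "\<exists>n. inverse a ^ n \<le> s"
    using real_arch_pow_inv[OF assms(2)] by (auto intro: less_imp_le)
  define n where "n = (LEAST n. inverse a ^ n \<le> s)"
  have "inverse a ^ n \<le> s"
    unfolding n_def by (rule LeastI_ex[OF ex])
  moreover have "s < a * inverse a ^ n"
  proof (cases n)
    case 0
    then show ?thesis using assms(3) by simp
  next
    case (Suc m)
    then have "\<not> inverse a ^ m \<le> s"
      using not_less_Least[of m "\<lambda>n. inverse a ^ n \<le> s"] unfolding n_def by simp
    moreover have "a * inverse a ^ n = inverse a ^ m"
      using Suc assms(1) by simp
    ultimately show ?thesis
      by linarith
  qed
  ultimately show ?thesis
    using that by blast
qed

lemma measure_le_integral_le_measure:
  fixes f :: "'a::topological_space \<Rightarrow> real"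
  assumes "finite_measure N" "sets N = sets borel" "f \<in> borel_measurable borel"
    and "A \<in> sets borel" "B \<in> sets borel" "\<And>y. indicator A y \<le> f y" "\<And>y. f y \<le> indicator B y"
  shows "measure N A \<le> integral\<^sup>L N f" and "integral\<^sup>L N f \<le> measure N B"
proof -
  have space: "space N = UNIV"
    using sets_eq_imp_space_eq[OF assms(2)] by simp
  have "integrable N f"
  proof (rule finite_measure.integrable_const_bound[OF assms(1)])
    have "0 \<le> f y" "f y \<le> 1" for y
      using assms(6,7)[of y] unfolding indicator_def of_bool_def by (auto split: if_splits)
    then show "AE y in N. norm (f y) \<le> 1"
      by (simp add: abs_le_iff)
  qed (simp add: measurable_cong_sets[OF assms(2) refl] assms(3))
  moreover have "integrable N (indicator C :: 'a \<Rightarrow> real)" if "C \<in> sets borel" for C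
    using assms(2) that finite_measure.emeasure_finite[OF assms(1)]
    by (intro integrable_real_indicator) (auto simp: less_top)
  moreover have "measure N C = integral\<^sup>L N (indicator C)" for C
    by (simp add: space)
  ultimately show "measure N A \<le> integral\<^sup>L N f" and "integral\<^sup>L N f \<le> measure N B"
    using integral_mono[of N "indicator A" f] integral_mono[of N f "indicator B"] assms(4-7)
    by (metis (no_types, lifting))+
qed

lemma weak_limit_measure_space:
  assumes "weak_limit M Ns" "\<And>j. prob_space (Ns j)"
  shows "measure M (space M) = 1"
proof -
  have "(\<lambda>j. integral\<^sup>L (Ns j) (\<lambda>_. 1)) \<longlonglongrightarrow> integral\<^sup>L M (\<lambda>_. 1 :: real)"
    using assms(1) continuous_on_const unfolding weak_limit_def by blast
  moreover have "integral\<^sup>L (Ns j) (\<lambda>_. 1 :: real) = 1" for j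
    using prob_space.prob_space[OF assms(2)] by simp
  ultimately have "(\<lambda>j. 1) \<longlonglongrightarrow> measure M (space M)"
    by simp
  from LIMSEQ_unique[OF this tendsto_const] show ?thesis
    by simp
qed

lemma weak_limit_ball_le:
  fixes M :: "'a::metric_space measure"
  assumes "weak_limit M Ns" "\<And>j. finite_measure (Ns j)" "\<And>j. sets (Ns j) = sets borel"
    and "\<forall>\<^sub>F j in sequentially. measure (Ns j) (ball x (3 * r)) \<le> D * measure (Ns j) (ball x (r / 2))"
    and "0 < r" "0 \<le> D"
  shows "measure M (ball x (2 * r)) \<le> D * measure M (ball x r)"
proof -
  define phi where "phi y = max 0 (min 1 (3 - dist x y / r))" for y
  define psi where "psi y = max 0 (min 1 (2 - 2 * dist x y / r))" for y
  have cont: "continuous_on UNIV phi" "continuous_on UNIV psi"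
    unfolding phi_def psi_def using \<open>0 < r\<close> by (auto intro!: continuous_intros)
  then have meas: "phi \<in> borel_measurable borel" "psi \<in> borel_measurable borel"
    by (simp_all add: borel_measurable_continuous_onI)
  have phi: "indicator (ball x (2 * r)) y \<le> phi y" "phi y \<le> indicator (ball x (3 * r)) y" for y
    using \<open>0 < r\<close> by (auto simp: indicator_def phi_def field_simps)
  have psi: "indicator (ball x (r / 2)) y \<le> psi y" "psi y \<le> indicator (ball x r) y" for y
    using \<open>0 < r\<close> by (auto simp: indicator_def psi_def field_simps)
  have M: "finite_measure M" "sets M = sets borel"
    using assms(1) unfolding weak_limit_def by auto
  have "\<forall>\<^sub>F j in sequentially. integral\<^sup>L (Ns j) phi \<le> D * integral\<^sup>L (Ns j) psi"
    using assms(4)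
  proof eventually_elim
    case (elim j)
    have "integral\<^sup>L (Ns j) phi \<le> measure (Ns j) (ball x (3 * r))"
      by (rule measure_le_integral_le_measure(2)[OF assms(2,3) meas(1) _ _ phi]) auto
    also have "\<dots> \<le> D * measure (Ns j) (ball x (r / 2))"
      by (rule elim)
    also have "\<dots> \<le> D * integral\<^sup>L (Ns j) psi"
      using \<open>0 \<le> D\<close>
      by (intro mult_left_mono measure_le_integral_le_measure(1)[OF assms(2,3) meas(2) _ _ psi]) auto
    finally show ?case .
  qed
  moreover have "(\<lambda>j. integral\<^sup>L (Ns j) phi) \<longlonglongrightarrow> integral\<^sup>L M phi"
      "(\<lambda>j. integral\<^sup>L (Ns j) psi) \<longlonglongrightarrow> integral\<^sup>L M psi"
    using assms(1) cont unfolding weak_limit_def by blast+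
  ultimately have "integral\<^sup>L M phi \<le> D * integral\<^sup>L M psi"
    by (intro tendsto_le[OF sequentially_bot]) (auto intro: tendsto_mult_left)
  moreover have "measure M (ball x (2 * r)) \<le> integral\<^sup>L M phi"
    by (rule measure_le_integral_le_measure(1)[OF M meas(1) _ _ phi]) auto
  moreover have "integral\<^sup>L M psi \<le> measure M (ball x r)"
    by (rule measure_le_integral_le_measure(2)[OF M meas(2) _ _ psi]) auto
  ultimately show ?thesis
    using mult_left_mono[OF _ \<open>0 \<le> D\<close>] by (meson order_trans)
qed

section \<open>Doubling of the limit measure\<close>

context filling_masses
begin

lemma measure_nu_ball_le_Suc:
  assumes "lam \<le> a"
    and "\<exists>P :: ('a \<times> 'a) measure. prob_space P \<and> sets P = sets borel \<and>
      distr P borel fst = nu k \<and> distr P borel snd = nu (Suc k) \<and>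
      emeasure P {(x1, x2). dist x1 x2 \<ge> (1 + 2 * lam / a) * a powr (- real k)} = 0"
  shows "measure (nu k) (ball x s) \<le> measure (nu (Suc k)) (ball x (s + 3 * inverse a ^ k))"
    and "measure (nu (Suc k)) (ball x s) \<le> measure (nu k) (ball x (s + 3 * inverse a ^ k))"
proof -
  define c where "c = (1 + 2 * lam / a) * a powr (- real k)"
  obtain P :: "('a \<times> 'a) measure" where P: "prob_space P" "sets P = sets borel"
      "distr P borel fst = nu k" "distr P borel snd = nu (Suc k)"
      "emeasure P {(x1, x2). c \<le> dist x1 x2} = 0"
    using assms(2) unfolding c_def by blast
  have "c \<le> 3 * inverse a ^ k"
    unfolding c_def using assms(1) a_pos
    by (simp add: powr_minus_real_nat field_simps mult_right_mono)
  then show "measure (nu k) (ball x s) \<le> measure (nu (Suc k)) (ball x (s + 3 * inverse a ^ k))"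
    and "measure (nu (Suc k)) (ball x s) \<le> measure (nu k) (ball x (s + 3 * inverse a ^ k))"
    using coupling_measure_ball_le[OF P(1,2,5), of x s] P(3,4) measure_nu_ball_mono[of "s + c"]
    by (metis add_left_mono order_trans)+
qed

lemma measure_nu_ball_le_at_finer_levels:
  assumes step: "\<And>k x s. measure (nu k) (ball x s) \<le> measure (nu (Suc k)) (ball x (s + 3 * inverse a ^ k))"
    and step': "\<And>k x s. measure (nu (Suc k)) (ball x s) \<le> measure (nu k) (ball x (s + 3 * inverse a ^ k))"
    and scale: "\<And>n x. measure (nu n) (ball x ((42 * a + 6) * inverse a ^ n))
      \<le> D * measure (nu n) (ball x (inverse a ^ n))"
    and "0 \<le> D" "inverse a ^ n \<le> r / 14" "r / 14 < a * inverse a ^ n"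
  shows "measure (nu (n + j)) (ball x (3 * r)) \<le> D * measure (nu (n + j)) (ball x (r / 2))"
proof -
  \<comment> \<open>the bracket on t gives 3 r + 6 t < (42 a + 6) t and t \<le> r / 2 - 6 t\<close>
  define t where "t = inverse a ^ n"
  have shift: "0 \<le> (3::real)" "0 \<le> inverse a" "inverse a \<le> 1/2"
    using two_le_a by (auto simp: field_simps)
  have mono: "measure (nu k) (ball x s) \<le> measure (nu k) (ball x s')" if "s \<le> s'" for k s s'
    using that by (rule measure_nu_ball_mono)
  have "measure (nu (n + j)) (ball x (3 * r)) \<le> measure (nu n) (ball x (3 * r + 6 * t))"
    using chain_shift_le_down[where F = "\<lambda>k s. measure (nu k) (ball x s)", OF mono step' shift]
    by (simp add: t_def)
  also have "\<dots> \<le> measure (nu n) (ball x ((42 * a + 6) * t))"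
    using assms(6) unfolding t_def by (intro mono) (simp add: algebra_simps)
  also have "\<dots> \<le> D * measure (nu n) (ball x t)"
    unfolding t_def by (rule scale)
  also have "\<dots> \<le> D * measure (nu n) (ball x (r / 2 - 6 * t))"
    using assms(5) \<open>0 \<le> D\<close> unfolding t_def by (intro mult_left_mono mono) auto
  also have "\<dots> \<le> D * measure (nu (n + j)) (ball x (r / 2))"
    using chain_shift_le_up[where F = "\<lambda>k s. measure (nu k) (ball x s)" and s = "r / 2 - 6 * t" and n = n,
        OF mono step shift] \<open>0 \<le> D\<close>
    by (intro mult_left_mono) (simp_all add: t_def)
  finally show ?thesis .
qed

lemma eventually_measure_nu_ball_le:
  assumes diam: "\<And>x y :: 'a. dist x y < a"
    and step: "\<And>k x s. measure (nu k) (ball x s) \<le> measure (nu (Suc k)) (ball x (s + 3 * inverse a ^ k))"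
    and step': "\<And>k x s. measure (nu (Suc k)) (ball x s) \<le> measure (nu k) (ball x (s + 3 * inverse a ^ k))"
    and scale: "\<And>n x. measure (nu n) (ball x ((42 * a + 6) * inverse a ^ n))
      \<le> D * measure (nu n) (ball x (inverse a ^ n))"
    and "0 \<le> D" "0 < r"
  shows "\<forall>\<^sub>F k in sequentially. measure (nu k) (ball x (3 * r)) \<le> max 1 D * measure (nu k) (ball x (r / 2))"
proof (cases "2 * a \<le> r")
  case True
  have "ball x (r / 2) = UNIV"
  proof (intro set_eqI iffI)
    fix y :: 'a
    show "y \<in> ball x (r / 2)"
      using diam[of x y] True by simp
  qed simp
  then have "measure (nu k) (ball x (r / 2)) = 1" for k
    using prob_space.prob_space[OF prob_space_nu] by (simp add: push_measure_def)
  moreover have "measure (nu k) (ball x (3 * r)) \<le> 1" for k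
    using prob_space_nu by (rule prob_space.prob_le_1)
  ultimately show ?thesis
    by (intro always_eventually allI) (simp add: le_max_iff_disj)
next
  case False
  obtain n where n: "inverse a ^ n \<le> r / 14" "r / 14 < a * inverse a ^ n"
    using inverse_power_bracket[of a "r / 14"] two_le_a \<open>0 < r\<close> False by auto
  have "measure (nu (n + j)) (ball x (3 * r)) \<le> max 1 D * measure (nu (n + j)) (ball x (r / 2))" for j
    using measure_nu_ball_le_at_finer_levels[OF step step' scale \<open>0 \<le> D\<close> n]
    by (meson max.cobounded2 measure_nonneg mult_right_mono order_trans)
  then show ?thesis
    by (intro eventually_sequentiallyI[of n]) (metis le_iff_add)
qed

lemma weak_limit_doubling_measure:
  assumes "weak_limit M (\<lambda>j. nu (r j))" "strict_mono r"
    and diam: "\<And>x y :: 'a. dist x y < a"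
    and step: "\<And>k x s. measure (nu k) (ball x s) \<le> measure (nu (Suc k)) (ball x (s + 3 * inverse a ^ k))"
    and step': "\<And>k x s. measure (nu (Suc k)) (ball x s) \<le> measure (nu k) (ball x (s + 3 * inverse a ^ k))"
    and scale: "\<And>n x. measure (nu n) (ball x ((42 * a + 6) * inverse a ^ n))
      \<le> D * measure (nu n) (ball x (inverse a ^ n))"
    and "0 \<le> D"
  shows "doubling_measure M"
proof -
  have "measure M (space M) = 1"
    using weak_limit_measure_space[OF assms(1) prob_space_nu] .
  moreover have "measure M (ball x (2 * s)) \<le> max 1 D * measure M (ball x s)" if "0 < s" for x s
    using weak_limit_ball_le[OF assms(1) prob_space.finite_measure[OF prob_space_nu] _
        eventually_subseq[OF assms(2) eventually_measure_nu_ball_le[OF diam step step' scale \<open>0 \<le> D\<close> that]] that]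
    by (simp add: push_measure_def)
  ultimately show ?thesis
    unfolding doubling_measure_def by (auto simp: measure_def)
qed

end

theorem lemma3p15:
  fixes a lam p C eta_m eta_p K0 :: real
    and x0 :: "'a::metric_space"
    and Xs :: "nat \<Rightarrow> 'a set"
    and par :: "'a \<times> nat \<Rightarrow> 'a \<times> nat"
    and rho :: "'a \<times> nat \<Rightarrow> real"
    and mu :: "nat \<Rightarrow> 'a \<times> nat \<Rightarrow> real"
    and r :: "nat \<Rightarrow> nat"
    and M :: "'a measure"
  assumes compact_X: "compact (UNIV :: 'a set)"
    and doubling_X: "doubling_metric_space TYPE('a)"
    and diam_X: "diameter (UNIV :: 'a set) = 1/2"
    and params: "6 \<le> lam" "lam \<le> a"
    and filling: "hyperbolic_filling a x0 Xs par"
    and p_pos: "0 < p"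
    and H1: "0 < eta_m" "eta_p < 1"
       "\<forall>v\<in>vertices Xs. eta_m \<le> rho v \<and> rho v \<le> eta_p"
    and H2: "K0 \<ge> 1"
       "\<forall>v w. hadj a lam Xs v w \<longrightarrow> piw rho par v \<le> K0 * piw rho par w"
    and H4: "\<forall>m n v. v \<in> level Xs m \<longrightarrow> m < n \<longrightarrow>
       (\<Sum>w\<in>descendants Xs par n v. piw rho par w powr p) \<le> piw rho par v powr p"
    and C_ge: "C \<ge> eta_m powr (- p)"
    and mu0: "mu 0 (x0, 0) = 1"
    and pmf: "\<forall>k. (\<forall>v\<in>level Xs k. mu k v \<ge> 0) \<and> (\<Sum>v\<in>level Xs k. mu k v) = 1"
    and compat: "\<forall>k. compatible Xs par rho p C k (mu k) (mu (Suc k))"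
    and bal: "\<forall>k. balanced a lam Xs par rho p C (Suc k) (mu (Suc k))"
    and coupling: "\<forall>k. \<exists>P :: ('a \<times> 'a) measure. prob_space P \<and> sets P = sets borel \<and>
         distr P borel fst = push_measure Xs k (mu k) \<and>
         distr P borel snd = push_measure Xs (Suc k) (mu (Suc k)) \<and>
         emeasure P {(x1, x2). dist x1 x2 \<ge> (1 + 2 * lam / a) * a powr (- real k)} = 0"
    and subseq: "strict_mono r"
    and limit: "weak_limit M (\<lambda>j. push_measure Xs (r j) (mu (r j)))"
  shows "doubling_measure M"
proof -
  interpret filling_masses a x0 Xs par mu
    using filling params pmf by unfold_locales auto
  have "eta_m \<le> rho v \<and> rho v \<le> 1" if "v \<in> vertices Xs" for v
    using H1 that by force
  moreover have "0 < 42 * a + 6" "5 \<le> lam"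
    using params by auto
  ultimately obtain D where D: "0 \<le> D" "\<And>n x. measure (nu n) (ball x ((42 * a + 6) * inverse a ^ n))
      \<le> D * measure (nu n) (ball x (inverse a ^ n))"
    using measure_nu_ball_scale_le_if_compatible_balanced[OF doubling_X _ _ p_pos H1(1) _ C_ge
        H2(2)[rule_format] compat[rule_format] bal[rule_format]] by blast
  have "dist x y < a" for x y :: 'a
  proof -
    have "dist x y \<le> 1/2"
      using diameter_bounded_bound[OF compact_imp_bounded[OF compact_X], of x y] diam_X by simp
    with params show ?thesis by linarith
  qed
  moreover have "measure (nu k) (ball x s) \<le> measure (nu (Suc k)) (ball x (s + 3 * inverse a ^ k))"
      "measure (nu (Suc k)) (ball x s) \<le> measure (nu k) (ball x (s + 3 * inverse a ^ k))" for k x s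
    using measure_nu_ball_le_Suc[OF params(2) coupling[rule_format]] by blast+
  ultimately show ?thesis
    using weak_limit_doubling_measure[OF limit subseq] D by blast
qed

end
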